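(* Let $\phi=k_1\wedge\dots\wedge k_m$ be a 3CNF in propositional variables $p_1,\dots,p_n$, and let $F(x_1,\dots,x_n,y_1,\dots,y_m)$ be any non-commutative formula over $GF(2)$. Then the propositional formula $$\Big(\neg F_{bool}(\bar p,\bar 0)\ \wedge\ F_{bool}\big(\bar p, Q^\phi_{1,bool}(\bar p),\dots,Q^\phi_{m,bool}(\bar p)\big)\Big)\ \rightarrow\ \neg\phi$$ has a Frege proof of size polynomial in the sizes of $F$ and $\phi$.
   Context: For a non-commutative formula $G$ over $GF(2)$, $G_{bool}$ is the Boolean formula obtained by replacing every $+$ gate by $\oplus$ (XOR), every $\times$ gate by $\wedge$, constants $0,1$ by $\mathsf{false},\mathsf{true}$, and each variable $x_i$ by $p_i$; $F_{bool}(\bar p,\bar 0)$ means $y_j$ replaced by $\mathsf{false}$, and $F_{bool}(\bar p,Q_{1,bool},\dots)$ means each $y_j$ replaced by the formula $Q^\phi_{j,bool}(\bar p)$. $Q^\phi_i=\mathrm{tr}'(k_i)$, where $\mathrm{tr}'(x)=1+x$ (i.e. $1-x$ over $GF(2)$), $\mathrm{tr}'(\neg x)=x$, and $\mathrm{tr}'(\ell_1\lor\dots\lor\ell_r)=\mathrm{tr}'(\ell_1)\cdots\mathrm{tr}'(\ell_r)$ (a tree of product gates). Frege: a fixed propositional proof system with finitely many sound axiom schemes and rules, implicationally complete, lines being Boolean formulas; size = total number of symbols. *)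

theory Defs
  imports Main
begin

datatype form =
    PVar nat
  | TT
  | FF
  | Neg form
  | Conj form form
  | Disj form form
  | Impl form form
  | Xor form form

fun eval :: "(nat \<Rightarrow> bool) \<Rightarrow> form \<Rightarrow> bool" where
  "eval v (PVar i) = v i"
| "eval v TT = True"
| "eval v FF = False"
| "eval v (Neg a) = (\<not> eval v a)"
| "eval v (Conj a b) = (eval v a \<and> eval v b)"
| "eval v (Disj a b) = (eval v a \<or> eval v b)"
| "eval v (Impl a b) = (eval v a \<longrightarrow> eval v b)"
| "eval v (Xor a b) = (eval v a \<noteq> eval v b)"

fun fsize :: "form \<Rightarrow> nat" where
  "fsize (PVar i) = 1"
| "fsize TT = 1"
| "fsize FF = 1"
| "fsize (Neg a) = 1 + fsize a"
| "fsize (Conj a b) = 1 + fsize a + fsize b"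
| "fsize (Disj a b) = 1 + fsize a + fsize b"
| "fsize (Impl a b) = 1 + fsize a + fsize b"
| "fsize (Xor a b) = 1 + fsize a + fsize b"

fun subst :: "(nat \<Rightarrow> form) \<Rightarrow> form \<Rightarrow> form" where
  "subst s (PVar i) = s i"
| "subst s TT = TT"
| "subst s FF = FF"
| "subst s (Neg a) = Neg (subst s a)"
| "subst s (Conj a b) = Conj (subst s a) (subst s b)"
| "subst s (Disj a b) = Disj (subst s a) (subst s b)"
| "subst s (Impl a b) = Impl (subst s a) (subst s b)"
| "subst s (Xor a b) = Xor (subst s a) (subst s b)"

text \<open>A rule scheme: a list of premise schemes and a conclusion scheme
  (axiom schemes are rules without premises); metavariables are the PVar's,
  instantiated by substitution.\<close>
type_synonym rule = "form list \<times> form"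

definition sound_rule :: "rule \<Rightarrow> bool" where
  "sound_rule r \<longleftrightarrow> (\<forall>v. (\<forall>p\<in>set (fst r). eval v p) \<longrightarrow> eval v (snd r))"

definition derivation :: "rule set \<Rightarrow> form set \<Rightarrow> form list \<Rightarrow> bool" where
  "derivation R \<Gamma> ls \<longleftrightarrow>
     (\<forall>k < length ls. ls ! k \<in> \<Gamma> \<or>
        (\<exists>r\<in>R. \<exists>\<sigma>. subst \<sigma> (snd r) = ls ! k \<and>
                   (\<forall>p\<in>set (fst r). subst \<sigma> p \<in> set (take k ls))))"

definition derivable_from :: "rule set \<Rightarrow> form set \<Rightarrow> form \<Rightarrow> bool" where
  "derivable_from R \<Gamma> A \<longleftrightarrow> (\<exists>ls. derivation R \<Gamma> ls \<and> ls \<noteq> [] \<and> last ls = A)"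

definition implicationally_complete :: "rule set \<Rightarrow> bool" where
  "implicationally_complete R \<longleftrightarrow>
     (\<forall>\<Gamma> A. finite \<Gamma> \<longrightarrow> (\<forall>v. (\<forall>g\<in>\<Gamma>. eval v g) \<longrightarrow> eval v A) \<longrightarrow> derivable_from R \<Gamma> A)"

definition frege_system :: "rule set \<Rightarrow> bool" where
  "frege_system R \<longleftrightarrow> finite R \<and> (\<forall>r\<in>R. sound_rule r) \<and> implicationally_complete R"

definition frege_proof :: "rule set \<Rightarrow> form list \<Rightarrow> form \<Rightarrow> bool" where
  "frege_proof R ls A \<longleftrightarrow> derivation R {} ls \<and> ls \<noteq> [] \<and> last ls = A"

definition proof_size :: "form list \<Rightarrow> nat" where
  "proof_size ls = sum_list (map fsize ls)"

text \<open>Variables x_i (XV i) and y_j (YV j); constants 0, 1; gates + and \<times>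
  (children ordered, i.e. non-commutative formulas).\<close>
datatype ncf =
    XV nat
  | YV nat
  | Zero
  | One
  | Plus ncf ncf
  | Times ncf ncf

fun ncsize :: "ncf \<Rightarrow> nat" where
  "ncsize (XV i) = 1"
| "ncsize (YV j) = 1"
| "ncsize Zero = 1"
| "ncsize One = 1"
| "ncsize (Plus a b) = 1 + ncsize a + ncsize b"
| "ncsize (Times a b) = 1 + ncsize a + ncsize b"

fun xvars :: "ncf \<Rightarrow> nat set" where
  "xvars (XV i) = {i}"
| "xvars (YV j) = {}"
| "xvars Zero = {}"
| "xvars One = {}"
| "xvars (Plus a b) = xvars a \<union> xvars b"
| "xvars (Times a b) = xvars a \<union> xvars b"

fun yvars :: "ncf \<Rightarrow> nat set" where
  "yvars (XV i) = {}"
| "yvars (YV j) = {j}"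
| "yvars Zero = {}"
| "yvars One = {}"
| "yvars (Plus a b) = yvars a \<union> yvars b"
| "yvars (Times a b) = yvars a \<union> yvars b"

fun to_bool :: "(nat \<Rightarrow> form) \<Rightarrow> ncf \<Rightarrow> form" where
  "to_bool ys (XV i) = PVar i"
| "to_bool ys (YV j) = ys j"
| "to_bool ys Zero = FF"
| "to_bool ys One = TT"
| "to_bool ys (Plus a b) = Xor (to_bool ys a) (to_bool ys b)"
| "to_bool ys (Times a b) = Conj (to_bool ys a) (to_bool ys b)"

datatype lit = Pos nat | NegLit nat

type_synonym clause = "lit list"
type_synonym cnf = "clause list"

fun lit_var :: "lit \<Rightarrow> nat" where
  "lit_var (Pos i) = i"
| "lit_var (NegLit i) = i"

fun lit_form :: "lit \<Rightarrow> form" where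
  "lit_form (Pos i) = PVar i"
| "lit_form (NegLit i) = Neg (PVar i)"

fun clause_form :: "clause \<Rightarrow> form" where
  "clause_form [] = FF"
| "clause_form [l] = lit_form l"
| "clause_form (l # ls) = Disj (lit_form l) (clause_form ls)"

fun cnf_form :: "cnf \<Rightarrow> form" where
  "cnf_form [] = TT"
| "cnf_form [k] = clause_form k"
| "cnf_form (k # ks) = Conj (clause_form k) (cnf_form ks)"

definition is_3cnf :: "cnf \<Rightarrow> bool" where
  "is_3cnf \<phi> \<longleftrightarrow> (\<forall>k\<in>set \<phi>. 1 \<le> length k \<and> length k \<le> 3)"

definition cnf_vars :: "cnf \<Rightarrow> nat set" where
  "cnf_vars \<phi> = lit_var ` (\<Union>k\<in>set \<phi>. set k)"

fun tr_lit :: "lit \<Rightarrow> ncf" where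
  "tr_lit (Pos i) = Plus One (XV i)"
| "tr_lit (NegLit i) = XV i"

fun tr_clause :: "clause \<Rightarrow> ncf" where
  "tr_clause [] = One"
| "tr_clause [l] = tr_lit l"
| "tr_clause (l # ls) = Times (tr_lit l) (tr_clause ls)"

text \<open>Q^\<phi>_i = tr'(k_i) (0-based index i).\<close>
definition Q :: "cnf \<Rightarrow> nat \<Rightarrow> ncf" where
  "Q \<phi> i = tr_clause (\<phi> ! i)"

definition target_formula :: "cnf \<Rightarrow> ncf \<Rightarrow> form" where
  "target_formula \<phi> F =
     Impl (Conj (Neg (to_bool (\<lambda>_. FF) F))
                (to_bool (\<lambda>j. to_bool (\<lambda>_. FF) (Q \<phi> j)) F))
          (Neg (cnf_form \<phi>))"

end

theory Submission
  imports Defs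
begin

text \<open>Under the hypothesis \<open>\<phi>\<close> every clause \<open>k\<^sub>j\<close> is true, so the Boolean translation
  of \<open>Q\<^sub>j = tr'(k\<^sub>j)\<close>, a conjunction of negated literals of \<open>k\<^sub>j\<close>, is false. Hence
  \<open>\<phi>\<close> implies that \<open>F\<close> with the \<open>Q\<^sub>j\<close> substituted for the \<open>y\<^sub>j\<close> is equivalent to \<open>F\<close> with
  \<open>0\<close> substituted; this is proved by induction on \<open>F\<close>, one application of a fixed
  tautology scheme per gate, and the target formula is one more such step.
  A Frege system simulates any fixed sound scheme by a proof of size linear in the
  substituted formulas: by implicational completeness the scheme has some derivation,
  and substitution instances of derivations are derivations. With \<open>N = |F| + |\<phi>|\<close>
  all formulas involved have size \<open>O(N\<^sup>2)\<close>, which gives a proof of size \<open>O(N\<^sup>5)\<close>.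
  The argument works for clauses of any width.\<close>

lemma subst_subst: "subst \<sigma> (subst \<tau> f) = subst (subst \<sigma> \<circ> \<tau>) f"
  by (induction f) auto

lemma fsize_pos: "0 < fsize f"
  by (cases f) auto

lemma fsize_subst_le:
  assumes "\<And>i. fsize (\<sigma> i) \<le> B" "1 \<le> B"
  shows "fsize (subst \<sigma> f) \<le> fsize f * B"
  using assms by (induction f) (auto simp: algebra_simps)

lemma proof_size_append: "proof_size (xs @ ys) = proof_size xs + proof_size ys"
  by (simp add: proof_size_def)

lemma derivation_Nil: "derivation R \<Gamma> []"
  by (simp add: derivation_def)

lemma derivation_subst:
  assumes "derivation R \<Gamma> ls"
  shows "derivation R (subst \<sigma> ` \<Gamma>) (map (subst \<sigma>) ls)"
  unfolding derivation_def
proof (intro allI impI)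
  fix k assume "k < length (map (subst \<sigma>) ls)"
  hence k: "k < length ls" by simp
  with assms consider "ls ! k \<in> \<Gamma>"
    | r \<tau> where "r \<in> R" "subst \<tau> (snd r) = ls ! k"
        "\<forall>p\<in>set (fst r). subst \<tau> p \<in> set (take k ls)"
    unfolding derivation_def by blast
  then show "map (subst \<sigma>) ls ! k \<in> subst \<sigma> ` \<Gamma> \<or>
    (\<exists>r\<in>R. \<exists>\<tau>. subst \<tau> (snd r) = map (subst \<sigma>) ls ! k \<and>
        (\<forall>p\<in>set (fst r). subst \<tau> p \<in> set (take k (map (subst \<sigma>) ls))))"
  proof cases
    case 1 with k show ?thesis by auto
  next
    case (2 r \<tau>)
    have "subst (subst \<sigma> \<circ> \<tau>) (snd r) = map (subst \<sigma>) ls ! k"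
      using 2 k by (simp add: subst_subst[symmetric])
    moreover have "\<forall>p\<in>set (fst r). subst (subst \<sigma> \<circ> \<tau>) p \<in> set (take k (map (subst \<sigma>) ls))"
      using 2 by (auto simp: subst_subst[symmetric] take_map)
    ultimately show ?thesis using \<open>r \<in> R\<close> by blast
  qed
qed

lemma derivation_append:
  assumes d1: "derivation R \<Gamma> ls1" and d2: "derivation R \<Delta> ls2"
    and hyps: "\<Delta> \<subseteq> \<Gamma> \<union> set ls1"
  shows "derivation R \<Gamma> (ls1 @ ls2)"
proof -
  define justified where "justified S x \<longleftrightarrow> x \<in> \<Gamma> \<or> (\<exists>r\<in>R. \<exists>\<sigma>. subst \<sigma> (snd r) = x \<and>
        (\<forall>p\<in>set (fst r). subst \<sigma> p \<in> S))" for S x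
  have mono: "justified S x \<Longrightarrow> S \<subseteq> S' \<Longrightarrow> justified S' x" for S S' x
    unfolding justified_def by blast
  have line1: "justified (set (take k ls1)) (ls1 ! k)" if "k < length ls1" for k
    using d1 that unfolding derivation_def justified_def by blast
  have "justified (set (take k (ls1 @ ls2))) ((ls1 @ ls2) ! k)" if k: "k < length (ls1 @ ls2)" for k
  proof (cases "k < length ls1")
    case True
    then show ?thesis using line1 by (simp add: nth_append)
  next
    case False
    define k2 where "k2 = k - length ls1"
    have k2: "k2 < length ls2" using k False k2_def by simp
    have line: "(ls1 @ ls2) ! k = ls2 ! k2" using False k2_def by (simp add: nth_append)
    have before: "set (take k (ls1 @ ls2)) = set ls1 \<union> set (take k2 ls2)"
      using False k2_def by simp
    from d2 k2 consider "ls2 ! k2 \<in> \<Gamma>" | "ls2 ! k2 \<in> set ls1"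
      | "\<exists>r\<in>R. \<exists>\<sigma>. subst \<sigma> (snd r) = ls2 ! k2 \<and>
          (\<forall>p\<in>set (fst r). subst \<sigma> p \<in> set (take k2 ls2))"
      using hyps unfolding derivation_def by blast
    then show ?thesis
    proof cases
      case 1 then show ?thesis unfolding line justified_def by blast
    next
      case 2
      \<comment> \<open>a hypothesis of the second derivation is re-justified as an earlier line\<close>
      then obtain k0 where k0: "k0 < length ls1" "ls1 ! k0 = ls2 ! k2"
        by (auto simp: in_set_conv_nth)
      have "set (take k0 ls1) \<subseteq> set (take k (ls1 @ ls2))"
        unfolding before by (meson UnI1 in_set_takeD subsetI)
      then show ?thesis using mono line1[OF k0(1)] k0(2) line by metis
    next
      case 3 then show ?thesis unfolding line justified_def before by blast
    qed
  qed
  then show ?thesis unfolding derivation_def justified_def by blast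
qed

definition provable_within :: "rule set \<Rightarrow> form \<Rightarrow> nat \<Rightarrow> bool" where
  "provable_within R A s \<longleftrightarrow> (\<exists>\<pi>. frege_proof R \<pi> A \<and> proof_size \<pi> \<le> s)"

lemma provable_within_mono: "provable_within R A s \<Longrightarrow> s \<le> s' \<Longrightarrow> provable_within R A s'"
  unfolding provable_within_def by fastforce

lemma derivation_containing_all:
  assumes "list_all2 (provable_within R) As ss"
  shows "\<exists>L. derivation R {} L \<and> proof_size L \<le> sum_list ss \<and> set As \<subseteq> set L"
  using assms
proof (induction As arbitrary: ss)
  case Nil
  then show ?case by (intro exI[of _ "[]"]) (auto simp: proof_size_def derivation_Nil)
next
  case (Cons A As)
  then obtain s ss' where ss: "ss = s # ss'" "provable_within R A s"
    "list_all2 (provable_within R) As ss'"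
    by (cases ss) auto
  from Cons.IH[OF ss(3)] obtain L where L: "derivation R {} L"
    "proof_size L \<le> sum_list ss'" "set As \<subseteq> set L"
    by blast
  from ss(2) obtain \<pi> where \<pi>: "derivation R {} \<pi>" "\<pi> \<noteq> []" "last \<pi> = A" "proof_size \<pi> \<le> s"
    unfolding provable_within_def frege_proof_def by blast
  have "derivation R {} (\<pi> @ L)" using derivation_append[OF \<pi>(1) L(1)] by simp
  moreover have "proof_size (\<pi> @ L) \<le> sum_list ss" using \<pi>(4) L(2) ss(1) by (simp add: proof_size_append)
  moreover have "set (A # As) \<subseteq> set (\<pi> @ L)" using \<pi>(2,3) L(3) by auto
  ultimately show ?case by blast
qed

text \<open>The size of a fixed derivation of a sound rule from its premises; it exists by
  implicational completeness.\<close>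
definition rule_cost :: "rule set \<Rightarrow> rule \<Rightarrow> nat" where
  "rule_cost R r = proof_size (SOME ls. derivation R (set (fst r)) ls \<and> ls \<noteq> [] \<and> last ls = snd r)"

lemma sound_rule_simulation:
  assumes "frege_system R" "sound_rule r"
    and provable_premises: "list_all2 (\<lambda>A s. provable_within R (subst \<sigma> A) s) (fst r) ss"
    and bounded: "\<And>i. fsize (\<sigma> i) \<le> B" "1 \<le> B"
  shows "provable_within R (subst \<sigma> (snd r)) (sum_list ss + rule_cost R r * B)"
proof -
  let ?derives = "\<lambda>ls. derivation R (set (fst r)) ls \<and> ls \<noteq> [] \<and> last ls = snd r"
  define \<rho> where "\<rho> = (SOME ls. ?derives ls)"
  have "derivable_from R (set (fst r)) (snd r)"
    using assms(1,2) unfolding frege_system_def implicationally_complete_def sound_rule_def by blast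
  then have \<rho>: "?derives \<rho>"
    unfolding \<rho>_def derivable_from_def by (rule someI_ex)
  have "list_all2 (provable_within R) (map (subst \<sigma>) (fst r)) ss"
    using provable_premises by (simp add: list_all2_map1)
  from derivation_containing_all[OF this] obtain L where L: "derivation R {} L"
    "proof_size L \<le> sum_list ss" "set (map (subst \<sigma>) (fst r)) \<subseteq> set L" by blast
  have "derivation R (subst \<sigma> ` set (fst r)) (map (subst \<sigma>) \<rho>)"
    using derivation_subst \<rho> by blast
  then have "derivation R {} (L @ map (subst \<sigma>) \<rho>)"
    by (rule derivation_append[OF L(1)]) (use L(3) in auto)
  moreover have "L @ map (subst \<sigma>) \<rho> \<noteq> []" "last (L @ map (subst \<sigma>) \<rho>) = subst \<sigma> (snd r)"
    using \<rho> by (simp_all add: last_map)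
  moreover have "proof_size (map (subst \<sigma>) \<rho>) \<le> rule_cost R r * B"
  proof -
    have "proof_size (map (subst \<sigma>) \<rho>) = (\<Sum>l\<leftarrow>\<rho>. fsize (subst \<sigma> l))"
      unfolding proof_size_def by (simp add: comp_def)
    also have "\<dots> \<le> (\<Sum>l\<leftarrow>\<rho>. fsize l * B)"
      by (rule sum_list_mono) (use fsize_subst_le[OF bounded] in auto)
    also have "\<dots> = rule_cost R r * B"
      unfolding rule_cost_def \<rho>_def[symmetric] proof_size_def
      by (induction \<rho>) (auto simp: algebra_simps)
    finally show ?thesis .
  qed
  ultimately show ?thesis
    unfolding provable_within_def frege_proof_def using L(2) by (fastforce simp: proof_size_append)
qed

definition subst_of_list :: "form list \<Rightarrow> nat \<Rightarrow> form" where
  "subst_of_list As i = (if i < length As then As ! i else TT)"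

abbreviation Iff :: "form \<Rightarrow> form \<Rightarrow> form" where
  "Iff a b \<equiv> Neg (Xor a b)"

definition "iff_refl_scheme = ([], Impl (PVar 0) (Iff (PVar 1) (PVar 1)))"
definition "xor_congr_scheme =
  ([Impl (PVar 0) (Iff (PVar 1) (PVar 2)), Impl (PVar 0) (Iff (PVar 3) (PVar 4))],
   Impl (PVar 0) (Iff (Xor (PVar 1) (PVar 3)) (Xor (PVar 2) (PVar 4))))"
definition "conj_congr_scheme =
  ([Impl (PVar 0) (Iff (PVar 1) (PVar 2)), Impl (PVar 0) (Iff (PVar 3) (PVar 4))],
   Impl (PVar 0) (Iff (Conj (PVar 1) (PVar 3)) (Conj (PVar 2) (PVar 4))))"
definition "refutation_scheme =
  ([Impl (PVar 0) (Iff (PVar 1) (PVar 2))], Impl (Conj (Neg (PVar 2)) (PVar 1)) (Neg (PVar 0)))"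
definition "imp_trans_scheme =
  ([Impl (PVar 0) (PVar 1), Impl (PVar 1) (PVar 2)], Impl (PVar 0) (PVar 2))"
definition "iff_false_scheme = ([Impl (PVar 0) (Neg (PVar 1))], Impl (PVar 0) (Iff (PVar 1) FF))"
definition "conj_imp_left_scheme = ([], Impl (Conj (PVar 0) (PVar 1)) (PVar 0))"
definition "conj_imp_right_scheme = ([Impl (PVar 1) (PVar 2)], Impl (Conj (PVar 0) (PVar 1)) (PVar 2))"
definition "imp_refl_scheme = ([], Impl (PVar 0) (PVar 0))"
definition "xor_true_scheme = ([], Impl (PVar 0) (Neg (Xor TT (PVar 0))))"
definition "disj_imp_not_conj_scheme =
  ([Impl (PVar 0) (Neg (PVar 1)), Impl (PVar 2) (Neg (PVar 3))],
   Impl (Disj (PVar 0) (PVar 2)) (Neg (Conj (PVar 1) (PVar 3))))"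
definition "false_imp_not_true_scheme = ([], Impl FF (Neg TT))"

definition "schemes =
  [iff_refl_scheme, xor_congr_scheme, conj_congr_scheme, refutation_scheme, imp_trans_scheme,
   iff_false_scheme, conj_imp_left_scheme, conj_imp_right_scheme, imp_refl_scheme,
   xor_true_scheme, disj_imp_not_conj_scheme, false_imp_not_true_scheme]"

lemmas scheme_defs = iff_refl_scheme_def xor_congr_scheme_def conj_congr_scheme_def
  refutation_scheme_def imp_trans_scheme_def iff_false_scheme_def conj_imp_left_scheme_def
  conj_imp_right_scheme_def imp_refl_scheme_def xor_true_scheme_def
  disj_imp_not_conj_scheme_def false_imp_not_true_scheme_def

definition schemes_cost :: "rule set \<Rightarrow> nat" where
  "schemes_cost R = sum_list (map (rule_cost R) schemes)"

lemma schemes_sound: "r \<in> set schemes \<Longrightarrow> sound_rule r"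
  unfolding schemes_def sound_rule_def by (auto simp: scheme_defs)

lemma scheme_instance_provable:
  assumes "frege_system R" "r \<in> set schemes"
    and "list_all2 (\<lambda>A s. provable_within R (subst (subst_of_list As) A) s) (fst r) ss"
    and "\<forall>A\<in>set As. fsize A \<le> B" "1 \<le> B"
    and "sum_list ss \<le> s" "subst (subst_of_list As) (snd r) = C"
  shows "provable_within R C (s + schemes_cost R * B)"
proof -
  have "\<And>i. fsize (subst_of_list As i) \<le> B"
    using assms(4,5) by (auto simp: subst_of_list_def)
  then have "provable_within R C (sum_list ss + rule_cost R r * B)"
    using sound_rule_simulation[OF assms(1) schemes_sound[OF assms(2)] assms(3)] assms(5,7) by simp
  moreover have "rule_cost R r \<le> schemes_cost R"
    unfolding schemes_cost_def using assms(2) by (simp add: member_le_sum_list)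
  then have "sum_list ss + rule_cost R r * B \<le> s + schemes_cost R * B"
    using assms(6) by (simp add: add_mono)
  ultimately show ?thesis by (rule provable_within_mono)
qed

abbreviation tr_clause_bool :: "clause \<Rightarrow> form" where
  "tr_clause_bool k \<equiv> to_bool (\<lambda>_. FF) (tr_clause k)"

lemma fsize_clause_le_cnf: "k \<in> set \<phi> \<Longrightarrow> fsize (clause_form k) \<le> fsize (cnf_form \<phi>)"
  by (induction \<phi> rule: cnf_form.induct) auto

lemma length_le_fsize_cnf: "length \<phi> \<le> fsize (cnf_form \<phi>)"
  by (induction \<phi> rule: cnf_form.induct) (auto simp: fsize_pos Suc_le_eq)

lemma length_le_fsize_clause: "length k \<le> fsize (clause_form k)"
proof (induction k rule: clause_form.induct)
  case (2 l) then show ?case by (cases l) auto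
qed auto

lemma fsize_tr_lit_le: "fsize (to_bool (\<lambda>_. FF) (tr_lit l)) \<le> 3 * fsize (lit_form l)"
  by (cases l) auto

lemma fsize_tr_clause_le: "fsize (tr_clause_bool k) \<le> 4 * fsize (clause_form k)"
proof (induction k rule: clause_form.induct)
  case (2 l) then show ?case using fsize_tr_lit_le[of l] by simp
next
  case (3 l l' ls) then show ?case using fsize_tr_lit_le[of l] by simp
qed auto

lemma fsize_to_bool_le:
  "(\<forall>j\<in>yvars G. fsize (ys j) \<le> M) \<Longrightarrow> 1 \<le> M \<Longrightarrow> fsize (to_bool ys G) \<le> ncsize G * M"
  by (induction G) (auto simp: algebra_simps)

context
  fixes R and B :: nat
  assumes frege: "frege_system R" and B: "2 \<le> B"
begin

lemmas scheme_instance = scheme_instance_provable[OF frege _ _ _ order.trans[OF _ B]]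

lemma provable_iff_refl:
  "fsize P \<le> B \<Longrightarrow> fsize a \<le> B \<Longrightarrow>
   provable_within R (Impl P (Iff a a)) (schemes_cost R * B)"
  using scheme_instance[of iff_refl_scheme "[P, a]" "[]" 0]
  by (simp add: schemes_def scheme_defs subst_of_list_def)

lemma provable_xor_congr:
  "fsize P \<le> B \<Longrightarrow> fsize a \<le> B \<Longrightarrow> fsize a' \<le> B \<Longrightarrow> fsize b \<le> B \<Longrightarrow> fsize b' \<le> B \<Longrightarrow>
   provable_within R (Impl P (Iff a a')) s1 \<Longrightarrow> provable_within R (Impl P (Iff b b')) s2 \<Longrightarrow>
   provable_within R (Impl P (Iff (Xor a b) (Xor a' b'))) (s1 + s2 + schemes_cost R * B)"
  using scheme_instance[of xor_congr_scheme "[P, a, a', b, b']" "[s1, s2]" "s1 + s2"]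
  by (simp add: schemes_def scheme_defs subst_of_list_def)

lemma provable_conj_congr:
  "fsize P \<le> B \<Longrightarrow> fsize a \<le> B \<Longrightarrow> fsize a' \<le> B \<Longrightarrow> fsize b \<le> B \<Longrightarrow> fsize b' \<le> B \<Longrightarrow>
   provable_within R (Impl P (Iff a a')) s1 \<Longrightarrow> provable_within R (Impl P (Iff b b')) s2 \<Longrightarrow>
   provable_within R (Impl P (Iff (Conj a b) (Conj a' b'))) (s1 + s2 + schemes_cost R * B)"
  using scheme_instance[of conj_congr_scheme "[P, a, a', b, b']" "[s1, s2]" "s1 + s2"]
  by (simp add: schemes_def scheme_defs subst_of_list_def)

lemma provable_refutation:
  "fsize P \<le> B \<Longrightarrow> fsize a \<le> B \<Longrightarrow> fsize b \<le> B \<Longrightarrow>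
   provable_within R (Impl P (Iff a b)) s \<Longrightarrow>
   provable_within R (Impl (Conj (Neg b) a) (Neg P)) (s + schemes_cost R * B)"
  using scheme_instance[of refutation_scheme "[P, a, b]" "[s]" s]
  by (simp add: schemes_def scheme_defs subst_of_list_def)

lemma provable_imp_trans:
  "fsize a \<le> B \<Longrightarrow> fsize b \<le> B \<Longrightarrow> fsize c \<le> B \<Longrightarrow>
   provable_within R (Impl a b) s1 \<Longrightarrow> provable_within R (Impl b c) s2 \<Longrightarrow>
   provable_within R (Impl a c) (s1 + s2 + schemes_cost R * B)"
  using scheme_instance[of imp_trans_scheme "[a, b, c]" "[s1, s2]" "s1 + s2"]
  by (simp add: schemes_def scheme_defs subst_of_list_def)

lemma provable_iff_false:
  "fsize a \<le> B \<Longrightarrow> fsize b \<le> B \<Longrightarrow> provable_within R (Impl a (Neg b)) s \<Longrightarrow>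
   provable_within R (Impl a (Iff b FF)) (s + schemes_cost R * B)"
  using scheme_instance[of iff_false_scheme "[a, b]" "[s]" s]
  by (simp add: schemes_def scheme_defs subst_of_list_def)

lemma provable_conj_imp_left:
  "fsize a \<le> B \<Longrightarrow> fsize b \<le> B \<Longrightarrow>
   provable_within R (Impl (Conj a b) a) (schemes_cost R * B)"
  using scheme_instance[of conj_imp_left_scheme "[a, b]" "[]" 0]
  by (simp add: schemes_def scheme_defs subst_of_list_def)

lemma provable_conj_imp_right:
  "fsize a \<le> B \<Longrightarrow> fsize b \<le> B \<Longrightarrow> fsize c \<le> B \<Longrightarrow> provable_within R (Impl b c) s \<Longrightarrow>
   provable_within R (Impl (Conj a b) c) (s + schemes_cost R * B)"
  using scheme_instance[of conj_imp_right_scheme "[a, b, c]" "[s]" s]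
  by (simp add: schemes_def scheme_defs subst_of_list_def)

lemma provable_imp_refl:
  "fsize a \<le> B \<Longrightarrow> provable_within R (Impl a a) (schemes_cost R * B)"
  using scheme_instance[of imp_refl_scheme "[a]" "[]" 0]
  by (simp add: schemes_def scheme_defs subst_of_list_def)

lemma provable_xor_true:
  "fsize a \<le> B \<Longrightarrow> provable_within R (Impl a (Neg (Xor TT a))) (schemes_cost R * B)"
  using scheme_instance[of xor_true_scheme "[a]" "[]" 0]
  by (simp add: schemes_def scheme_defs subst_of_list_def)

lemma provable_disj_imp_not_conj:
  "fsize a \<le> B \<Longrightarrow> fsize b \<le> B \<Longrightarrow> fsize c \<le> B \<Longrightarrow> fsize d \<le> B \<Longrightarrow>
   provable_within R (Impl a (Neg b)) s1 \<Longrightarrow> provable_within R (Impl c (Neg d)) s2 \<Longrightarrow>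
   provable_within R (Impl (Disj a c) (Neg (Conj b d))) (s1 + s2 + schemes_cost R * B)"
  using scheme_instance[of disj_imp_not_conj_scheme "[a, b, c, d]" "[s1, s2]" "s1 + s2"]
  by (simp add: schemes_def scheme_defs subst_of_list_def)

lemma provable_false_imp_not_true:
  "provable_within R (Impl FF (Neg TT)) (schemes_cost R * B)"
  using scheme_instance[of false_imp_not_true_scheme "[]" "[]" 0]
  by (simp add: schemes_def scheme_defs subst_of_list_def)

lemma provable_lit_refutes_tr_lit:
  "provable_within R (Impl (lit_form l) (Neg (to_bool (\<lambda>_. FF) (tr_lit l)))) (schemes_cost R * B)"
proof (cases l)
  case (Pos i) then show ?thesis using provable_xor_true[of "PVar i"] B by simp
next
  case (NegLit i) then show ?thesis using provable_imp_refl[of "Neg (PVar i)"] B by simp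
qed

lemma provable_clause_refutes_tr_clause:
  "fsize (clause_form k) \<le> B \<Longrightarrow> fsize (tr_clause_bool k) \<le> B \<Longrightarrow>
   provable_within R (Impl (clause_form k) (Neg (tr_clause_bool k)))
     ((2 * length k + 1) * (schemes_cost R * B))"
proof (induction k rule: clause_form.induct)
  case 1 then show ?case using provable_false_imp_not_true by simp
next
  case (2 l) then show ?case using provable_lit_refutes_tr_lit[of l] provable_within_mono by fastforce
next
  case (3 l l' ls)
  then have IH: "provable_within R (Impl (clause_form (l' # ls)) (Neg (tr_clause_bool (l' # ls))))
      ((2 * length (l' # ls) + 1) * (schemes_cost R * B))"
    by simp
  have sizes: "fsize (lit_form l) \<le> B" "fsize (to_bool (\<lambda>_. FF) (tr_lit l)) \<le> B"
    "fsize (clause_form (l' # ls)) \<le> B" "fsize (tr_clause_bool (l' # ls)) \<le> B"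
    using "3.prems" by auto
  from provable_disj_imp_not_conj[OF sizes provable_lit_refutes_tr_lit IH]
  show ?case by (simp add: algebra_simps)
qed

lemma provable_cnf_imp_clause:
  "fsize (cnf_form \<phi>) \<le> B \<Longrightarrow> j < length \<phi> \<Longrightarrow>
   provable_within R (Impl (cnf_form \<phi>) (clause_form (\<phi> ! j))) ((j + 1) * (schemes_cost R * B))"
proof (induction \<phi> arbitrary: j rule: cnf_form.induct)
  case 1 then show ?case by simp
next
  case (2 k) then show ?case using provable_imp_refl[of "clause_form k"] by simp
next
  case (3 k k' ks)
  have sizes: "fsize (clause_form k) \<le> B" "fsize (cnf_form (k' # ks)) \<le> B"
    using "3.prems"(1) by auto
  show ?case
  proof (cases j)
    case 0
    then show ?thesis using provable_conj_imp_left[OF sizes] by simp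
  next
    case (Suc i)
    then have i: "i < length (k' # ks)" using "3.prems"(2) by simp
    have "fsize (clause_form ((k' # ks) ! i)) \<le> B"
      using fsize_clause_le_cnf[OF nth_mem[OF i]] sizes(2) by (rule order.trans)
    from provable_conj_imp_right[OF sizes this "3.IH"[OF sizes(2) i]]
    show ?thesis using Suc by (simp add: algebra_simps)
  qed
qed

lemma provable_tr_clause_false:
  assumes "fsize (cnf_form \<phi>) \<le> B" "j < length \<phi>" "fsize (tr_clause_bool (\<phi> ! j)) < B"
  shows "provable_within R (Impl (cnf_form \<phi>) (Iff (tr_clause_bool (\<phi> ! j)) FF))
    (5 * B * (schemes_cost R * B))"
proof -
  let ?K = "schemes_cost R * B" and ?k = "\<phi> ! j"
  have clause: "fsize (clause_form ?k) \<le> B"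
    using fsize_clause_le_cnf[OF nth_mem[OF assms(2)]] assms(1) by (rule order.trans)
  have "provable_within R (Impl (cnf_form \<phi>) (Neg (tr_clause_bool ?k)))
      ((j + 1) * ?K + (2 * length ?k + 1) * ?K + ?K)"
    using provable_imp_trans[OF assms(1) clause _ provable_cnf_imp_clause[OF assms(1,2)]
        provable_clause_refutes_tr_clause[OF clause]] assms(3) by simp
  from provable_iff_false[OF assms(1) _ this]
  have "provable_within R (Impl (cnf_form \<phi>) (Iff (tr_clause_bool ?k) FF))
      ((j + 2 * length ?k + 4) * ?K)"
    using assms(3) by (simp add: algebra_simps)
  moreover have "j + 2 * length ?k + 4 \<le> 5 * B"
    using assms(1,2) length_le_fsize_cnf[of \<phi>] length_le_fsize_clause[of ?k] clause B by linarith
  ultimately show ?thesis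
    by (elim provable_within_mono) simp
qed

lemma provable_to_bool_iff_all_false:
  assumes "fsize P \<le> B"
    and "\<forall>j\<in>yvars G. provable_within R (Impl P (Iff (ys j) FF)) M" "schemes_cost R * B \<le> M"
  shows "fsize (to_bool ys G) \<le> B \<Longrightarrow> fsize (to_bool (\<lambda>_. FF) G) \<le> B \<Longrightarrow>
    provable_within R (Impl P (Iff (to_bool ys G) (to_bool (\<lambda>_. FF) G))) (ncsize G * M)"
  using assms(2)
proof (induction G)
  case (YV j) then show ?case by simp
next
  case (Plus a b)
  then have "provable_within R (Impl P (Iff (to_bool ys (Plus a b)) (to_bool (\<lambda>_. FF) (Plus a b))))
      (ncsize a * M + ncsize b * M + schemes_cost R * B)"
    using provable_xor_congr[OF assms(1)] by simp
  then show ?case by (elim provable_within_mono) (use assms(3) in \<open>simp add: algebra_simps\<close>)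
next
  case (Times a b)
  then have "provable_within R (Impl P (Iff (to_bool ys (Times a b)) (to_bool (\<lambda>_. FF) (Times a b))))
      (ncsize a * M + ncsize b * M + schemes_cost R * B)"
    using provable_conj_congr[OF assms(1)] by simp
  then show ?case by (elim provable_within_mono) (use assms(3) in \<open>simp add: algebra_simps\<close>)
qed (use B in \<open>auto intro!: provable_within_mono[OF provable_iff_refl[OF assms(1)] assms(3)]\<close>)

lemma provable_target_formula:
  assumes "fsize (cnf_form \<phi>) \<le> B" "yvars F \<subseteq> {..<length \<phi>}"
    and "\<forall>j<length \<phi>. fsize (tr_clause_bool (\<phi> ! j)) < B"
    and "fsize (to_bool (\<lambda>j. to_bool (\<lambda>_. FF) (Q \<phi> j)) F) \<le> B"
    and "fsize (to_bool (\<lambda>_. FF) F) \<le> B"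
  shows "provable_within R (target_formula \<phi> F) ((ncsize F + 1) * (5 * B * (schemes_cost R * B)))"
proof -
  let ?M = "5 * B * (schemes_cost R * B)"
  have "\<forall>j\<in>yvars F. provable_within R
      (Impl (cnf_form \<phi>) (Iff (to_bool (\<lambda>_. FF) (Q \<phi> j)) FF)) ?M"
    using provable_tr_clause_false[OF assms(1)] assms(2,3) by (auto simp: Q_def)
  from provable_to_bool_iff_all_false[OF assms(1) this _ assms(4,5)]
  have "provable_within R (Impl (cnf_form \<phi>)
      (Iff (to_bool (\<lambda>j. to_bool (\<lambda>_. FF) (Q \<phi> j)) F) (to_bool (\<lambda>_. FF) F))) (ncsize F * ?M)"
    using B by simp
  from provable_refutation[OF assms(1,4,5) this]
  show ?thesis
    unfolding target_formula_def by (elim provable_within_mono) (use B in simp)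
qed

end

lemma target_size_bounds:
  fixes \<phi> :: cnf and F :: ncf
  defines "N \<equiv> ncsize F + fsize (cnf_form \<phi>)"
  assumes "yvars F \<subseteq> {..<length \<phi>}"
  shows "2 \<le> 6 * N * N" "fsize (cnf_form \<phi>) \<le> 6 * N * N"
    and "\<forall>j<length \<phi>. fsize (tr_clause_bool (\<phi> ! j)) < 6 * N * N"
    and "fsize (to_bool (\<lambda>j. to_bool (\<lambda>_. FF) (Q \<phi> j)) F) \<le> 6 * N * N"
    and "fsize (to_bool (\<lambda>_. FF) F) \<le> 6 * N * N"
proof -
  let ?p = "fsize (cnf_form \<phi>)"
  have p: "1 \<le> ?p" using fsize_pos by (simp add: Suc_le_eq)
  have "1 \<le> ncsize F" by (cases F) auto
  then have N: "2 \<le> N" "N \<le> N * N" "ncsize F \<le> N" "?p \<le> N" using p by (simp_all add: N_def)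
  have "ncsize F * ?p \<le> N * N" using N by (intro mult_mono) auto
  then have Np: "4 * ?p < 6 * N * N" using N by linarith
  show "2 \<le> 6 * N * N" "?p \<le> 6 * N * N" using N by linarith+
  have clause_small: "fsize (tr_clause_bool (\<phi> ! j)) \<le> 4 * ?p" if "j < length \<phi>" for j
    using fsize_tr_clause_le[of "\<phi> ! j"] fsize_clause_le_cnf[OF nth_mem[OF that]] by linarith
  then show "\<forall>j<length \<phi>. fsize (tr_clause_bool (\<phi> ! j)) < 6 * N * N"
    using Np by fastforce
  have "fsize (to_bool (\<lambda>j. to_bool (\<lambda>_. FF) (Q \<phi> j)) F) \<le> ncsize F * (4 * ?p)"
    by (rule fsize_to_bool_le) (use assms(2) clause_small p in \<open>auto simp: Q_def\<close>)
  then show "fsize (to_bool (\<lambda>j. to_bool (\<lambda>_. FF) (Q \<phi> j)) F) \<le> 6 * N * N"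
    using \<open>ncsize F * ?p \<le> N * N\<close> by linarith
  have "fsize (to_bool (\<lambda>_. FF) F) \<le> ncsize F * 1" by (rule fsize_to_bool_le) auto
  then show "fsize (to_bool (\<lambda>_. FF) F) \<le> 6 * N * N" using N by linarith
qed

theorem lemma5p3:
  assumes "frege_system R"
  shows "\<exists>c d::nat. \<forall>(n::nat) (\<phi>::cnf) (F::ncf).
           is_3cnf \<phi> \<and> cnf_vars \<phi> \<subseteq> {..<n} \<and>
           xvars F \<subseteq> {..<n} \<and> yvars F \<subseteq> {..<length \<phi>} \<longrightarrow>
           (\<exists>\<pi>. frege_proof R \<pi> (target_formula \<phi> F) \<and>
                proof_size \<pi> \<le> c * (ncsize F + fsize (cnf_form \<phi>)) ^ d)"
proof (rule exI[of _ "180 * schemes_cost R"], rule exI[of _ 5], intro allI impI)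
  fix n :: nat and \<phi> :: cnf and F :: ncf
  assume "is_3cnf \<phi> \<and> cnf_vars \<phi> \<subseteq> {..<n} \<and> xvars F \<subseteq> {..<n} \<and> yvars F \<subseteq> {..<length \<phi>}"
  then have yvars: "yvars F \<subseteq> {..<length \<phi>}" by simp
  define N where "N = ncsize F + fsize (cnf_form \<phi>)"
  note bounds = target_size_bounds[OF yvars, folded N_def]
  have "provable_within R (target_formula \<phi> F)
      ((ncsize F + 1) * (5 * (6 * N * N) * (schemes_cost R * (6 * N * N))))"
    using provable_target_formula[OF assms bounds(1,2) yvars bounds(3-5)] .
  moreover have "ncsize F + 1 \<le> N"
    using fsize_pos[of "cnf_form \<phi>"] by (simp add: N_def)
  then have "(ncsize F + 1) * (5 * (6 * N * N) * (schemes_cost R * (6 * N * N)))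
      \<le> 180 * schemes_cost R * N ^ 5"
  proof -
    have "(ncsize F + 1) * (5 * (6 * N * N) * (schemes_cost R * (6 * N * N)))
        = 180 * schemes_cost R * ((ncsize F + 1) * N ^ 4)"
      by (simp only: power4_eq_xxxx ac_simps)
    also have "\<dots> \<le> 180 * schemes_cost R * (N * N ^ 4)"
      using \<open>ncsize F + 1 \<le> N\<close> by (intro mult_left_mono mult_right_mono) auto
    finally show ?thesis by (simp add: power_Suc[symmetric])
  qed
  ultimately show "\<exists>\<pi>. frege_proof R \<pi> (target_formula \<phi> F) \<and>
      proof_size \<pi> \<le> 180 * schemes_cost R * (ncsize F + fsize (cnf_form \<phi>)) ^ 5"
    unfolding provable_within_def N_def by (meson order.trans)
qed

end
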